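(* Let $N$ be a positive integer and $K$ a compact Hausdorff space. Then $\ell_\infty^N$ can be U-embedded into $C(K)$ if and only if $K$ contains at least $N$ distinct $G_\delta$-points (points $p$ such that $\{p\}$ is a $G_\delta$-subset of $K$).
   Context: $\ell_\infty^N$ is $\mathbb R^N$ with the max norm; $C(K)$ carries the sup norm. A linear isometry $T\colon X\to Y$ is a U-embedding if every $x^*\in X^*$ has a unique $y^*\in Y^*$ with $T^*(y^* )=x^*$ and $\|y^*\|=\|x^*\|$. *)

theory Defs
  imports "HOL-Analysis.Analysis"
begin

text \<open>C(K) for a topological space K = topspace X: continuous real functions,
  represented extensionally (zero outside topspace X).\<close>
definition CK :: "'a topology \<Rightarrow> ('a \<Rightarrow> real) set" where
  "CK X = {f. continuous_map X euclideanreal f \<and> (\<forall>x. x \<notin> topspace X \<longrightarrow> f x = 0)}"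

text \<open>Sup norm on C(K) (0 if K is empty).\<close>
definition supn :: "'a topology \<Rightarrow> ('a \<Rightarrow> real) \<Rightarrow> real" where
  "supn X f = Sup (insert 0 ((\<lambda>x. \<bar>f x\<bar>) ` topspace X))"

definition CK_dual :: "'a topology \<Rightarrow> (('a \<Rightarrow> real) \<Rightarrow> real) \<Rightarrow> bool" where
  "CK_dual X \<phi> \<longleftrightarrow>
     (\<forall>f\<in>CK X. \<forall>g\<in>CK X. \<phi> (\<lambda>x. f x + g x) = \<phi> f + \<phi> g) \<and>
     (\<forall>c. \<forall>f\<in>CK X. \<phi> (\<lambda>x. c * f x) = c * \<phi> f) \<and>
     (\<exists>B. \<forall>f\<in>CK X. \<bar>\<phi> f\<bar> \<le> B * supn X f)"

definition CK_dual_norm :: "'a topology \<Rightarrow> (('a \<Rightarrow> real) \<Rightarrow> real) \<Rightarrow> real" where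
  "CK_dual_norm X \<phi> = Sup {\<bar>\<phi> f\<bar> | f. f \<in> CK X \<and> supn X f \<le> 1}"

definition linf_dual_norm :: "(real^'n \<Rightarrow> real) \<Rightarrow> real" where
  "linf_dual_norm g = Sup {\<bar>g x\<bar> | x. infnorm x \<le> 1}"

definition linf_CK_isometry :: "'a topology \<Rightarrow> (real^'n \<Rightarrow> ('a \<Rightarrow> real)) \<Rightarrow> bool" where
  "linf_CK_isometry X T \<longleftrightarrow>
     (\<forall>x y. T (x + y) = (\<lambda>t. T x t + T y t)) \<and> (\<forall>c x. T (c *\<^sub>R x) = (\<lambda>t. c * T x t)) \<and> (\<forall>x. T x \<in> CK X) \<and> (\<forall>x. supn X (T x) = infnorm x)"

text \<open>U-embedding: every functional on l_infinity^N has a unique norm-preserving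
  extension through T^* (uniqueness as elements of C(K)*, i.e. on C(K)).\<close>
definition U_embedding :: "'a topology \<Rightarrow> (real^'n \<Rightarrow> ('a \<Rightarrow> real)) \<Rightarrow> bool" where
  "U_embedding X T \<longleftrightarrow> linf_CK_isometry X T \<and>
     (\<forall>g::real^'n \<Rightarrow> real. linear g \<longrightarrow>
        (\<exists>\<phi>. CK_dual X \<phi> \<and> (\<forall>x. \<phi> (T x) = g x) \<and> CK_dual_norm X \<phi> = linf_dual_norm g \<and>
           (\<forall>\<psi>. CK_dual X \<psi> \<and> (\<forall>x. \<psi> (T x) = g x) \<and> CK_dual_norm X \<psi> = linf_dual_norm g
                 \<longrightarrow> (\<forall>f\<in>CK X. \<psi> f = \<phi> f))))"

definition gdelta_points :: "'a topology \<Rightarrow> 'a set" where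
  "gdelta_points X = {p \<in> topspace X. gdelta_in X {p}}"

end

(* If T is a U-embedding, the i-th coordinate functional has norm 1, and wherever |T e_i| reaches its
   maximum 1 all other T e_j vanish, so the signed point evaluation f |-> T e_i(t) f(t) is a
   norm-preserving extension of it. Uniqueness of the extension forces |T e_i| to peak at exactly one
   point p_i; hence {p_i} = {|T e_i| = 1} is a G_delta set, and the p_i are distinct.

   Conversely, distinct G_delta points p_1, ..., p_N carry peak functions h_i (h_i(p_i) = 1 > h_i
   elsewhere) with disjoint supports, and T x = sum_i x_i h_i is an isometry. A norm-preserving
   extension psi of g attains its norm at u = T (sgn g(e_i))_i, and |u| < 1 off the p_i, so u can be
   moved in the direction of any f vanishing at the p_i without leaving the unit ball; this forces
   psi f = 0, hence psi = sum_i g(e_i) delta_(p_i). *)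

theory Submission
  imports Defs
begin

lemma gdelta_in_continuous_map_preimage:
  assumes "continuous_map X Y f" "gdelta_in Y S"
  shows "gdelta_in X {x \<in> topspace X. f x \<in> S}"
proof -
  obtain C :: "nat \<Rightarrow> 'b set" where C: "\<And>n. openin Y (C n)" "\<Inter>(range C) = S"
    using assms(2) unfolding gdelta_in_descending by blast
  have "{x \<in> topspace X. f x \<in> S} = (\<Inter>n. {x \<in> topspace X. f x \<in> C n})"
    using C(2) by blast
  moreover have "gdelta_in X (\<Inter>n. {x \<in> topspace X. f x \<in> C n})"
  proof (rule gdelta_in_Inter)
    show "gdelta_in X U" if "U \<in> range (\<lambda>n. {x \<in> topspace X. f x \<in> C n})" for U
      using that openin_continuous_map_preimage[OF assms(1) C(1)] open_imp_gdelta_in by blast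
  qed auto
  ultimately show ?thesis
    by simp
qed

lemma continuous_map_attains_sup:
  assumes "compactin X C" "C \<noteq> {}" "continuous_map X euclideanreal u"
  obtains t where "t \<in> C" "\<And>y. y \<in> C \<Longrightarrow> u y \<le> u t"
proof -
  have "compact (u ` C)"
    using image_compactin[OF assms(1,3)] by simp
  then obtain m where "m \<in> u ` C" "\<forall>z\<in>u ` C. z \<le> m"
    using compact_attains_sup assms(2) by blast
  then show thesis
    using that by blast
qed

lemma continuous_map_suminf:
  fixes g :: "nat \<Rightarrow> 'a \<Rightarrow> real"
  assumes "\<And>n. continuous_map X euclideanreal (g n)"
    and "\<And>n x. x \<in> topspace X \<Longrightarrow> \<bar>g n x\<bar> \<le> M n" and "summable M"
  shows "continuous_map X euclideanreal (\<lambda>x. \<Sum>n. g n x)"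
proof -
  have "uniform_limit (topspace X) (\<lambda>n x. \<Sum>i<n. g i x) (\<lambda>x. \<Sum>n. g n x) sequentially"
    using assms(2,3) by (intro Weierstrass_m_test) auto
  then have "\<forall>\<^sub>F n in sequentially. \<forall>x\<in>topspace X. dist (\<Sum>i<n. g i x) (\<Sum>n. g n x) < \<epsilon>"
    if "\<epsilon> > 0" for \<epsilon>
    using that unfolding uniform_limit_iff by blast
  moreover have "continuous_map X euclideanreal (\<lambda>x. \<Sum>i<n. g i x)" for n
    using assms(1) by (intro continuous_map_sum) auto
  ultimately show ?thesis
    using Met_TC.continuous_map_uniform_limit[where F=sequentially and X=X
        and f="\<lambda>n x. \<Sum>i<n. g i x" and g="\<lambda>x. \<Sum>n. g n x"]
    by simp
qed

lemma Hausdorff_space_disjoint_open_nbhds: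
  fixes p :: "'i::finite \<Rightarrow> 'a"
  assumes hd: "Hausdorff_space X" and p: "\<And>i. p i \<in> topspace X" and inj: "inj p"
  obtains V where "\<And>i. openin X (V i)" "\<And>i. p i \<in> V i" "\<And>i j. i \<noteq> j \<Longrightarrow> disjnt (V i) (V j)"
proof -
  have "\<exists>U W. openin X U \<and> openin X W \<and> p i \<in> U \<and> p j \<in> W \<and> disjnt U W" if "i \<noteq> j" for i j
    using hd p inj_eq[OF inj, of i j] that unfolding Hausdorff_space_def by metis
  then obtain U W where UW: "\<And>i j. i \<noteq> j \<Longrightarrow>
      openin X (U i j) \<and> openin X (W i j) \<and> p i \<in> U i j \<and> p j \<in> W i j \<and> disjnt (U i j) (W i j)"
    by metis
  define V where "V i = (\<Inter>j\<in>UNIV - {i}. U i j \<inter> W j i) \<inter> topspace X" for i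
  show thesis
  proof
    show "openin X (V i)" for i
      unfolding V_def using UW by (intro openin_INT) auto
    show "p i \<in> V i" for i
      unfolding V_def using UW p by auto
    show "disjnt (V i) (V j)" if "i \<noteq> j" for i j
      using UW[OF that] that unfolding V_def disjnt_def by blast
  qed
qed

section \<open>Continuous functions on \<open>K\<close> and functionals on \<open>C(K)\<close>\<close>

lemma CK_continuous_map: "f \<in> CK X \<Longrightarrow> continuous_map X euclideanreal f"
  by (simp add: CK_def)

lemma CK_restrict:
  "continuous_map X euclideanreal f \<Longrightarrow> (\<lambda>x. if x \<in> topspace X then f x else 0) \<in> CK X"
  unfolding CK_def by (auto intro: continuous_map_eq)

lemma CK_zero: "(\<lambda>x. 0) \<in> CK X"
  by (simp add: CK_def)

lemma CK_add: "f \<in> CK X \<Longrightarrow> g \<in> CK X \<Longrightarrow> (\<lambda>x. f x + g x) \<in> CK X"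
  by (simp add: CK_def continuous_map_add)

lemma CK_diff: "f \<in> CK X \<Longrightarrow> g \<in> CK X \<Longrightarrow> (\<lambda>x. f x - g x) \<in> CK X"
  by (simp add: CK_def continuous_map_diff)

lemma CK_cmul: "f \<in> CK X \<Longrightarrow> (\<lambda>x. c * f x) \<in> CK X"
  by (simp add: CK_def continuous_map_real_mult_left)

lemma bdd_above_abs_CK:
  assumes "compact_space X" "f \<in> CK X"
  shows "bdd_above ((\<lambda>x. \<bar>f x\<bar>) ` topspace X)"
proof -
  have "continuous_map X euclideanreal (\<lambda>x. \<bar>f x\<bar>)"
    using assms(2) by (simp add: CK_def continuous_map_real_abs)
  then have "compact ((\<lambda>x. \<bar>f x\<bar>) ` topspace X)"
    using assms(1) image_compactin compact_space_def by fastforce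
  then show ?thesis
    by (simp add: bounded_imp_bdd_above compact_imp_bounded)
qed

lemma abs_le_supn:
  assumes "compact_space X" "f \<in> CK X" "x \<in> topspace X"
  shows "\<bar>f x\<bar> \<le> supn X f"
  unfolding supn_def by (rule cSup_upper) (use bdd_above_abs_CK[OF assms(1,2)] assms(3) in auto)

lemma supn_nonneg: "compact_space X \<Longrightarrow> f \<in> CK X \<Longrightarrow> 0 \<le> supn X f"
  unfolding supn_def by (rule cSup_upper) (use bdd_above_abs_CK in auto)

lemma supn_le:
  assumes "0 \<le> c" "\<And>x. x \<in> topspace X \<Longrightarrow> \<bar>f x\<bar> \<le> c"
  shows "supn X f \<le> c"
  unfolding supn_def by (rule cSup_least) (use assms in auto)

lemma supn_eq_0_imp_zero:
  assumes "compact_space X" "f \<in> CK X" "supn X f = 0"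
  shows "f = (\<lambda>x. 0)"
proof
  fix x
  show "f x = 0"
    using abs_le_supn[OF assms(1,2), of x] assms(2,3) by (cases "x \<in> topspace X") (auto simp: CK_def)
qed

lemma CK_dual_add: "CK_dual X \<phi> \<Longrightarrow> f \<in> CK X \<Longrightarrow> g \<in> CK X \<Longrightarrow> \<phi> (\<lambda>x. f x + g x) = \<phi> f + \<phi> g"
  by (simp add: CK_dual_def)

lemma CK_dual_cmul: "CK_dual X \<phi> \<Longrightarrow> f \<in> CK X \<Longrightarrow> \<phi> (\<lambda>x. c * f x) = c * \<phi> f"
  by (simp add: CK_dual_def)

lemma CK_dual_zero: "CK_dual X \<phi> \<Longrightarrow> \<phi> (\<lambda>x. 0) = 0"
  using CK_dual_cmul[OF _ CK_zero, of X \<phi> 0] by simp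

lemma abs_le_CK_dual_norm:
  assumes "compact_space X" "CK_dual X \<phi>" "f \<in> CK X" "supn X f \<le> 1"
  shows "\<bar>\<phi> f\<bar> \<le> CK_dual_norm X \<phi>"
proof -
  obtain B where B: "\<forall>f\<in>CK X. \<bar>\<phi> f\<bar> \<le> B * supn X f"
    using assms(2) by (auto simp: CK_dual_def)
  have "\<bar>\<phi> g\<bar> \<le> max B 0" if "g \<in> CK X" "supn X g \<le> 1" for g
  proof -
    have "\<bar>\<phi> g\<bar> \<le> max B 0 * supn X g"
      using B that(1) supn_nonneg[OF assms(1) that(1)] by (meson max.cobounded1 mult_right_mono order_trans)
    also have "\<dots> \<le> max B 0"
      using that(2) by (simp add: mult_left_le)
    finally show ?thesis .
  qed
  then have bdd: "bdd_above {\<bar>\<phi> g\<bar> | g. g \<in> CK X \<and> supn X g \<le> 1}"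
    by (auto intro!: bdd_aboveI)
  show ?thesis
    unfolding CK_dual_norm_def by (rule cSup_upper[OF _ bdd]) (use assms(3,4) in auto)
qed

lemma CK_dual_norm_le:
  assumes "\<And>f. f \<in> CK X \<Longrightarrow> supn X f \<le> 1 \<Longrightarrow> \<bar>\<phi> f\<bar> \<le> c"
  shows "CK_dual_norm X \<phi> \<le> c"
proof -
  have "supn X (\<lambda>x. 0) \<le> 1"
    by (rule supn_le) auto
  then show ?thesis
    unfolding CK_dual_norm_def by (intro cSup_least) (use assms CK_zero in auto)
qed

lemma CK_dual_norm_nonneg:
  assumes "compact_space X" "CK_dual X \<phi>"
  shows "0 \<le> CK_dual_norm X \<phi>"
proof -
  have "supn X (\<lambda>x. 0) \<le> 1"
    by (rule supn_le) auto
  then show ?thesis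
    using abs_le_CK_dual_norm[OF assms CK_zero] by simp
qed

lemma abs_CK_dual_le:
  assumes "compact_space X" "CK_dual X \<phi>" "f \<in> CK X"
  shows "\<bar>\<phi> f\<bar> \<le> CK_dual_norm X \<phi> * supn X f"
proof (cases "supn X f = 0")
  case True
  then show ?thesis
    using supn_eq_0_imp_zero[OF assms(1,3)] CK_dual_zero[OF assms(2)] by simp
next
  case False
  define s where "s = supn X f"
  have s: "s > 0"
    using False supn_nonneg[OF assms(1,3)] by (simp add: s_def)
  have g: "(\<lambda>x. inverse s * f x) \<in> CK X"
    using assms(3) by (rule CK_cmul)
  have "supn X (\<lambda>x. inverse s * f x) \<le> 1"
    using s abs_le_supn[OF assms(1,3)]
    by (intro supn_le) (auto simp: s_def abs_mult field_simps)
  then have "\<bar>\<phi> (\<lambda>x. inverse s * f x)\<bar> \<le> CK_dual_norm X \<phi>"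
    using abs_le_CK_dual_norm[OF assms(1,2) g] by blast
  moreover have "\<phi> (\<lambda>x. inverse s * f x) = inverse s * \<phi> f"
    using CK_dual_cmul[OF assms(2,3)] .
  ultimately show ?thesis
    using s by (simp add: s_def abs_mult field_simps)
qed

lemma CK_dual_point_combination:
  assumes "compact_space X" "finite I" "\<And>i. i \<in> I \<Longrightarrow> p i \<in> topspace X"
  shows "CK_dual X (\<lambda>f. \<Sum>i\<in>I. a i * f (p i))"
    and "CK_dual_norm X (\<lambda>f. \<Sum>i\<in>I. a i * f (p i)) \<le> (\<Sum>i\<in>I. \<bar>a i\<bar>)"
proof -
  have bound: "\<bar>\<Sum>i\<in>I. a i * f (p i)\<bar> \<le> (\<Sum>i\<in>I. \<bar>a i\<bar>) * supn X f" if "f \<in> CK X" for f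
  proof -
    have "\<bar>\<Sum>i\<in>I. a i * f (p i)\<bar> \<le> (\<Sum>i\<in>I. \<bar>a i * f (p i)\<bar>)"
      by (rule sum_abs)
    also have "\<dots> \<le> (\<Sum>i\<in>I. \<bar>a i\<bar> * supn X f)"
      unfolding abs_mult using abs_le_supn[OF assms(1) that assms(3)]
      by (intro sum_mono mult_left_mono) auto
    finally show ?thesis
      by (simp add: sum_distrib_right)
  qed
  show "CK_dual X (\<lambda>f. \<Sum>i\<in>I. a i * f (p i))"
    unfolding CK_dual_def
  proof (intro conjI ballI allI)
    show "\<exists>B. \<forall>f\<in>CK X. \<bar>\<Sum>i\<in>I. a i * f (p i)\<bar> \<le> B * supn X f"
      using bound by blast
  qed (simp_all add: distrib_left sum.distrib sum_distrib_left mult.left_commute)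
  show "CK_dual_norm X (\<lambda>f. \<Sum>i\<in>I. a i * f (p i)) \<le> (\<Sum>i\<in>I. \<bar>a i\<bar>)"
  proof (rule CK_dual_norm_le)
    fix f assume "f \<in> CK X" "supn X f \<le> 1"
    then show "\<bar>\<Sum>i\<in>I. a i * f (p i)\<bar> \<le> (\<Sum>i\<in>I. \<bar>a i\<bar>)"
      using bound[of f] by (meson mult_left_le order_trans sum_nonneg abs_ge_zero)
  qed
qed

lemma separating_CK_function:
  assumes "compact_space X" "Hausdorff_space X" "s \<in> topspace X" "t \<in> topspace X" "s \<noteq> t"
  obtains f where "f \<in> CK X" "f s = 1" "f t = 0"
proof -
  have "normal_space X"
    using assms(1,2) compact_Hausdorff_or_regular_imp_normal_space by blast
  moreover have "closedin X {t}" "closedin X {s}" "disjnt {t} {s}"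
    using closedin_Hausdorff_singleton[OF assms(2)] assms(3-5) by auto
  ultimately obtain f where f: "continuous_map X euclideanreal f" "f ` {t} \<subseteq> {0}" "f ` {s} \<subseteq> {1}"
    by (rule Urysohn_lemma_alt)
  show thesis
    using that[OF CK_restrict[OF f(1)]] f(2,3) assms(3,4) by simp
qed

lemma CK_dual_point_eval:
  assumes "compact_space X" "t \<in> topspace X"
  shows "CK_dual X (\<lambda>f. c * f t)" and "CK_dual_norm X (\<lambda>f. c * f t) = \<bar>c\<bar>"
proof -
  show dual: "CK_dual X (\<lambda>f. c * f t)"
    using CK_dual_point_combination(1)[OF assms(1), of "{t}" id "\<lambda>_. c"] assms(2) by simp
  have "CK_dual_norm X (\<lambda>f. c * f t) \<le> \<bar>c\<bar>"
    using CK_dual_point_combination(2)[OF assms(1), of "{t}" id "\<lambda>_. c"] assms(2) by simp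
  moreover
  have one: "(\<lambda>x. if x \<in> topspace X then 1 else 0) \<in> CK X"
    using CK_restrict[of X "\<lambda>x. 1"] by simp
  have "supn X (\<lambda>x. if x \<in> topspace X then 1 else 0) \<le> 1"
    by (rule supn_le) auto
  then have "\<bar>c\<bar> \<le> CK_dual_norm X (\<lambda>f. c * f t)"
    using abs_le_CK_dual_norm[OF assms(1) dual one] assms(2) by simp
  ultimately show "CK_dual_norm X (\<lambda>f. c * f t) = \<bar>c\<bar>"
    by linarith
qed

section \<open>The dual norm of \<open>\<ell>\<^sub>\<infinity>\<^sup>N\<close>\<close>

lemma linear_cart_basis_expansion:
  fixes g :: "real^'n \<Rightarrow> 'b::real_vector"
  assumes "linear g"
  shows "g x = (\<Sum>i\<in>UNIV. x$i *\<^sub>R g (axis i 1))"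
proof -
  have "g x = g (\<Sum>i\<in>UNIV. x$i *\<^sub>R axis i 1)"
    using basis_expansion[of x] by (simp add: scalar_mult_eq_scaleR)
  also have "\<dots> = (\<Sum>i\<in>UNIV. x$i *\<^sub>R g (axis i 1))"
    using assms by (simp add: linear_sum linear_scale)
  finally show ?thesis .
qed

lemma infnorm_le_cart:
  assumes "\<And>i. \<bar>(x::real^'n)$i\<bar> \<le> c"
  shows "infnorm x \<le> c"
  unfolding infnorm_cart by (rule cSup_least) (use assms in auto)

lemma infnorm_attained_cart: "\<exists>k. infnorm (x::real^'n) = \<bar>x$k\<bar>"
proof -
  have "{\<bar>x$i\<bar> |i. i\<in>UNIV} = range (\<lambda>i. \<bar>x$i\<bar>)"
    by auto
  then have fin: "finite {\<bar>x$i\<bar> |i. i\<in>UNIV}" and ne: "{\<bar>x$i\<bar> |i. i\<in>UNIV} \<noteq> {}"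
    by simp_all
  have "infnorm x \<in> {\<bar>x$i\<bar> |i. i\<in>UNIV}"
    unfolding infnorm_cart using cSup_eq_Max[OF fin ne] Max_in[OF fin ne] by simp
  then show ?thesis
    by auto
qed

lemma infnorm_axis_1: "infnorm (axis i 1 :: real^'n) = 1"
proof (rule antisym)
  show "infnorm (axis i 1 :: real^'n) \<le> 1"
    by (rule infnorm_le_cart) (simp add: axis_def)
  show "1 \<le> infnorm (axis i 1 :: real^'n)"
    using component_le_infnorm_cart[of "axis i 1 :: real^'n" i] by simp
qed

lemma linf_dual_norm_linear:
  fixes g :: "real^'n \<Rightarrow> real"
  assumes "linear g"
  shows "linf_dual_norm g = (\<Sum>i\<in>UNIV. \<bar>g (axis i 1)\<bar>)"
proof -
  let ?A = "\<Sum>i\<in>UNIV. \<bar>g (axis i 1)\<bar>"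
  let ?B = "{\<bar>g x\<bar> | x. infnorm x \<le> 1}"
  have expand: "g x = (\<Sum>i\<in>UNIV. x$i * g (axis i 1))" for x
    using linear_cart_basis_expansion[OF assms, of x] by simp
  have bound: "\<bar>g x\<bar> \<le> ?A" if "infnorm x \<le> 1" for x
  proof -
    have "\<bar>g x\<bar> \<le> (\<Sum>i\<in>UNIV. \<bar>x$i * g (axis i 1)\<bar>)"
      unfolding expand[of x] by (rule sum_abs)
    also have "\<dots> \<le> ?A"
    proof (rule sum_mono)
      fix i
      have "\<bar>x$i\<bar> \<le> 1"
        using component_le_infnorm_cart[of x i] that by linarith
      then show "\<bar>x$i * g (axis i 1)\<bar> \<le> \<bar>g (axis i 1)\<bar>"
        by (simp add: abs_mult mult_left_le_one_le)
    qed
    finally show ?thesis .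
  qed
  then have bdd: "bdd_above ?B"
    by (intro bdd_aboveI[of _ ?A]) blast
  define y :: "real^'n" where "y = (\<chi> i. sgn (g (axis i 1)))"
  have y: "infnorm y \<le> 1"
    by (rule infnorm_le_cart) (simp add: y_def abs_sgn_eq)
  have "g y = ?A"
    unfolding expand[of y] by (simp add: y_def abs_sgn mult.commute)
  then have "\<bar>g y\<bar> = ?A"
    by (simp add: sum_nonneg)
  moreover have "\<bar>g y\<bar> \<le> Sup ?B"
    using y by (intro cSup_upper[OF _ bdd]) blast
  ultimately have "?A \<le> Sup ?B"
    by simp
  moreover have "Sup ?B \<le> ?A"
    using bound y by (intro cSup_least) auto
  ultimately show ?thesis
    unfolding linf_dual_norm_def by linarith
qed

section \<open>U-embeddings single out \<open>G\<^sub>\<delta>\<close>-points\<close>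

lemma linf_CK_isometry_linear_at:
  "linf_CK_isometry X T \<Longrightarrow> linear (\<lambda>x. T x t)"
  by (rule linearI) (simp_all add: linf_CK_isometry_def)

lemma linf_CK_isometry_sum_abs_basis_le:
  fixes T :: "real^'n \<Rightarrow> 'a \<Rightarrow> real"
  assumes "compact_space X" "linf_CK_isometry X T" "t \<in> topspace X"
  shows "(\<Sum>j\<in>UNIV. \<bar>T (axis j 1) t\<bar>) \<le> 1"
proof -
  define y :: "real^'n" where "y = (\<chi> j. sgn (T (axis j 1) t))"
  have "T y t = (\<Sum>j\<in>UNIV. y$j * T (axis j 1) t)"
    using linear_cart_basis_expansion[OF linf_CK_isometry_linear_at[OF assms(2)], of y] by simp
  also have "\<dots> = (\<Sum>j\<in>UNIV. \<bar>T (axis j 1) t\<bar>)"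
    by (simp add: y_def abs_sgn mult.commute)
  finally have "(\<Sum>j\<in>UNIV. \<bar>T (axis j 1) t\<bar>) \<le> supn X (T y)"
    using abs_le_supn[OF assms(1) _ assms(3), of "T y"] assms(2)
    by (simp add: linf_CK_isometry_def sum_nonneg)
  also have "\<dots> = infnorm y"
    using assms(2) by (simp add: linf_CK_isometry_def)
  also have "\<dots> \<le> 1"
    by (rule infnorm_le_cart) (simp add: y_def abs_sgn_eq)
  finally show ?thesis .
qed

lemma linf_CK_isometry_eval_at_basis_peak:
  fixes T :: "real^'n \<Rightarrow> 'a \<Rightarrow> real"
  assumes "compact_space X" "linf_CK_isometry X T" "t \<in> topspace X" "\<bar>T (axis i 1) t\<bar> = 1"
  shows "T x t = T (axis i 1) t * x$i"
proof -
  have others: "T (axis j 1) t = 0" if "j \<noteq> i" for j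
  proof -
    have "(\<Sum>k\<in>{i,j}. \<bar>T (axis k 1) t\<bar>) \<le> (\<Sum>k\<in>UNIV. \<bar>T (axis k 1) t\<bar>)"
      by (rule sum_mono2) auto
    then show ?thesis
      using linf_CK_isometry_sum_abs_basis_le[OF assms(1-3)] assms(4) that by simp
  qed
  have "T x t = (\<Sum>j\<in>UNIV. x$j * T (axis j 1) t)"
    using linear_cart_basis_expansion[OF linf_CK_isometry_linear_at[OF assms(2)], of x] by simp
  also have "\<dots> = x$i * T (axis i 1) t"
    by (subst sum.remove[of _ i]) (auto simp: others)
  finally show ?thesis
    by simp
qed

lemma linf_CK_isometry_basis_attains_1:
  fixes T :: "real^'n \<Rightarrow> 'a \<Rightarrow> real"
  assumes "compact_space X" "linf_CK_isometry X T"
  obtains t where "t \<in> topspace X" "\<bar>T (axis i 1) t\<bar> = 1"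
proof -
  have TCK: "T (axis i 1) \<in> CK X" and sup1: "supn X (T (axis i 1)) = 1"
    using assms(2) infnorm_axis_1 by (auto simp: linf_CK_isometry_def)
  have "topspace X \<noteq> {}"
    using sup1 by (auto simp: supn_def)
  then obtain t where t: "t \<in> topspace X" "\<And>y. y \<in> topspace X \<Longrightarrow> \<bar>T (axis i 1) y\<bar> \<le> \<bar>T (axis i 1) t\<bar>"
    using continuous_map_attains_sup[of X "topspace X" "\<lambda>y. \<bar>T (axis i 1) y\<bar>"] assms(1)
      continuous_map_real_abs[OF CK_continuous_map[OF TCK]] compact_space_def by blast
  have "supn X (T (axis i 1)) \<le> \<bar>T (axis i 1) t\<bar>"
    using t by (intro supn_le) auto
  moreover have "\<bar>T (axis i 1) t\<bar> \<le> supn X (T (axis i 1))"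
    using abs_le_supn[OF assms(1) TCK t(1)] .
  ultimately show thesis
    using that t(1) sup1 by simp
qed

lemma U_embedding_basis_peak_unique:
  fixes T :: "real^'n \<Rightarrow> 'a \<Rightarrow> real"
  assumes cpt: "compact_space X" and hd: "Hausdorff_space X" and U: "U_embedding X T"
    and s: "s \<in> topspace X" "\<bar>T (axis i 1) s\<bar> = 1"
    and s': "s' \<in> topspace X" "\<bar>T (axis i 1) s'\<bar> = 1"
  shows "s = s'"
proof (rule ccontr)
  assume "s \<noteq> s'"
  have iso: "linf_CK_isometry X T"
    using U by (simp add: U_embedding_def)
  let ?g = "\<lambda>x::real^'n. x$i"
  have lin: "linear ?g"
    by (rule linearI) auto
  have "linf_dual_norm ?g = (\<Sum>j\<in>UNIV. if j = i then 1 else 0)"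
    unfolding linf_dual_norm_linear[OF lin] by (intro sum.cong) (auto simp: axis_def)
  then have norm_g: "linf_dual_norm ?g = 1"
    by simp
  obtain \<phi> where \<phi>: "\<forall>\<psi>. CK_dual X \<psi> \<and> (\<forall>x. \<psi> (T x) = ?g x) \<and>
      CK_dual_norm X \<psi> = linf_dual_norm ?g \<longrightarrow> (\<forall>f\<in>CK X. \<psi> f = \<phi> f)"
    using U lin unfolding U_embedding_def by blast
  have ext: "\<forall>f\<in>CK X. T (axis i 1) t * f t = \<phi> f"
    if t: "t \<in> topspace X" "\<bar>T (axis i 1) t\<bar> = 1" for t
  proof (rule \<phi>[THEN spec, THEN mp], intro conjI)
    show "CK_dual X (\<lambda>f. T (axis i 1) t * f t)"
      by (rule CK_dual_point_eval(1)[OF cpt t(1)])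
    show "CK_dual_norm X (\<lambda>f. T (axis i 1) t * f t) = linf_dual_norm ?g"
      using CK_dual_point_eval(2)[OF cpt t(1)] t(2) norm_g by simp
    have sq: "T (axis i 1) t * T (axis i 1) t = 1"
      using t(2) by (metis abs_mult_self_eq mult_1)
    show "\<forall>x. T (axis i 1) t * T x t = ?g x"
    proof
      fix x :: "real^'n"
      have "T x t = T (axis i 1) t * x$i"
        by (rule linf_CK_isometry_eval_at_basis_peak[OF cpt iso t])
      then show "T (axis i 1) t * T x t = ?g x"
        using sq by (simp add: mult.assoc[symmetric])
    qed
  qed
  obtain f where f: "f \<in> CK X" "f s = 1" "f s' = 0"
    using separating_CK_function[OF cpt hd s(1) s'(1) \<open>s \<noteq> s'\<close>] .
  have "T (axis i 1) s * f s = T (axis i 1) s' * f s'"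
    using ext[OF s] ext[OF s'] f(1) by simp
  then show False
    using f(2,3) s(2) by simp
qed

lemma U_embedding_imp_gdelta_points:
  fixes T :: "real^'n \<Rightarrow> 'a \<Rightarrow> real"
  assumes cpt: "compact_space X" and hd: "Hausdorff_space X" and U: "U_embedding X T"
  shows "\<exists>S. S \<subseteq> gdelta_points X \<and> finite S \<and> card S = CARD('n)"
proof -
  have iso: "linf_CK_isometry X T"
    using U by (simp add: U_embedding_def)
  have "\<forall>i. \<exists>t. t \<in> topspace X \<and> \<bar>T (axis i 1) t\<bar> = 1"
    using linf_CK_isometry_basis_attains_1[OF cpt iso] by metis
  then obtain p where p: "\<And>i. p i \<in> topspace X" "\<And>i. \<bar>T (axis i 1) (p i)\<bar> = 1"
    by metis
  have "{p i} = {t \<in> topspace X. \<bar>T (axis i 1) t\<bar> \<in> {1}}" for i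
    using U_embedding_basis_peak_unique[OF cpt hd U _ _ p(1) p(2)] p by blast
  moreover have "gdelta_in X {t \<in> topspace X. \<bar>T (axis i 1) t\<bar> \<in> {1}}" for i
  proof (rule gdelta_in_continuous_map_preimage)
    show "continuous_map X euclideanreal (\<lambda>t. \<bar>T (axis i 1) t\<bar>)"
      using iso by (intro continuous_map_real_abs CK_continuous_map) (simp add: linf_CK_isometry_def)
    show "gdelta_in euclideanreal {1::real}"
      by (rule closed_imp_gdelta_in) (simp_all add: metrizable_space_euclidean)
  qed
  ultimately have "range p \<subseteq> gdelta_points X"
    using p(1) by (auto simp: gdelta_points_def)
  moreover have "inj p"
  proof (rule injI, rule ccontr)
    fix i j
    assume "p i = p j" "i \<noteq> j"
    then have "T (axis j 1) (p j) = T (axis i 1) (p i) * (axis j 1 :: real^'n)$i"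
      using linf_CK_isometry_eval_at_basis_peak[OF cpt iso p(1,2)] by metis
    also have "\<dots> = 0"
      using \<open>i \<noteq> j\<close> by (simp add: axis_def)
    finally show False
      using p(2)[of j] by simp
  qed
  ultimately show ?thesis
    by (intro exI[of _ "range p"]) (simp add: card_image)
qed

section \<open>Peak functions at \<open>G\<^sub>\<delta>\<close>-points\<close>

lemma half_series_weighted:
  fixes a :: "nat \<Rightarrow> real"
  assumes "\<And>n. 0 \<le> a n" "\<And>n. a n \<le> 1"
  shows "summable (\<lambda>n. (1/2)^Suc n * a n)"
    and "0 \<le> (\<Sum>n. (1/2)^Suc n * a n)" "(\<Sum>n. (1/2)^Suc n * a n) \<le> 1"
    and "a k < 1 \<Longrightarrow> (\<Sum>n. (1/2)^Suc n * a n) < 1"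
proof -
  have geo: "summable (\<lambda>n. (1/2::real)^Suc n)" "(\<Sum>n. (1/2::real)^Suc n) = 1"
    using power_half_series by (auto simp: sums_iff)
  have le: "(1/2)^Suc n * a n \<le> (1/2::real)^Suc n" for n
    using mult_left_le[OF assms(2)] by simp
  show s: "summable (\<lambda>n. (1/2)^Suc n * a n)"
    using assms(1) le by (intro summable_comparison_test'[OF geo(1)]) auto
  show "0 \<le> (\<Sum>n. (1/2)^Suc n * a n)"
    using assms(1) by (intro suminf_nonneg[OF s]) simp
  show "(\<Sum>n. (1/2)^Suc n * a n) \<le> 1"
    using suminf_le[OF le s geo(1)] geo(2) by simp
  assume "a k < 1"
  have "0 < (\<Sum>n. (1/2::real)^Suc n - (1/2)^Suc n * a n)"
    using le \<open>a k < 1\<close> by (intro suminf_pos2[of _ k] summable_diff[OF geo(1) s]) auto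
  also have "\<dots> = 1 - (\<Sum>n. (1/2)^Suc n * a n)"
    using suminf_diff[OF geo(1) s] geo(2) by simp
  finally show "(\<Sum>n. (1/2)^Suc n * a n) < 1"
    by simp
qed

lemma gdelta_point_Urysohn_sequence:
  assumes cpt: "compact_space X" and hd: "Hausdorff_space X" and p: "p \<in> topspace X"
    and gd: "gdelta_in X {p}" and V: "openin X V" "p \<in> V"
  obtains g :: "nat \<Rightarrow> 'a \<Rightarrow> real"
  where "\<And>n. continuous_map X (top_of_set {0..1}) (g n)" "\<And>n. g n p = 1"
    "\<And>t. t \<in> topspace X - {p} \<Longrightarrow> \<exists>n. g n t = 0" "\<And>n t. t \<in> topspace X - V \<Longrightarrow> g n t = 0"
proof -
  obtain C :: "nat \<Rightarrow> 'a set" where C: "\<And>n. openin X (C n)" "\<Inter>(range C) = {p}"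
    using gd unfolding gdelta_in_descending by blast
  have normal: "normal_space X"
    using cpt hd compact_Hausdorff_or_regular_imp_normal_space by blast
  have "\<exists>g. continuous_map X (top_of_set {0..1::real}) g \<and> g ` (topspace X - (C n \<inter> V)) \<subseteq> {0} \<and> g p = 1"
    for n
  proof -
    have "closedin X (topspace X - (C n \<inter> V))" "disjnt (topspace X - (C n \<inter> V)) {p}"
      using C V by (auto simp: disjnt_def)
    then obtain g where "continuous_map X (top_of_set {0..1::real}) g"
      "g ` (topspace X - (C n \<inter> V)) \<subseteq> {0}" "g ` {p} \<subseteq> {1}"
      by (rule Urysohn_lemma[where a=0 and b=1, OF normal _ closedin_Hausdorff_singleton[OF hd p]]) auto
    then show ?thesis
      by blast
  qed
  then have "\<exists>g. \<forall>n. continuous_map X (top_of_set {0..1::real}) (g n) \<and>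
      g n ` (topspace X - (C n \<inter> V)) \<subseteq> {0} \<and> g n p = 1"
    by (rule choice[OF allI])
  then obtain g where g: "\<And>n. continuous_map X (top_of_set {0..1::real}) (g n)"
    "\<And>n. g n ` (topspace X - (C n \<inter> V)) \<subseteq> {0}" "\<And>n. g n p = 1"
    by blast
  show thesis
  proof (rule that[OF g(1,3)])
    fix t assume "t \<in> topspace X - {p}"
    moreover from this obtain n where "t \<notin> C n"
      using C(2) by auto
    ultimately show "\<exists>n. g n t = 0"
      using g(2)[of n] by auto
  next
    fix n t assume "t \<in> topspace X - V"
    then show "g n t = 0"
      using g(2)[of n] by auto
  qed
qed

definition peak_function :: "'a topology \<Rightarrow> 'a \<Rightarrow> ('a \<Rightarrow> real) \<Rightarrow> bool" where
  "peak_function X p h \<longleftrightarrow>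
     h \<in> CK X \<and> h p = 1 \<and> (\<forall>t. 0 \<le> h t \<and> h t \<le> 1) \<and> (\<forall>t \<in> topspace X - {p}. h t < 1)"

text \<open>Weighted by \<open>2\<^sup>-\<^sup>n\<^sup>-\<^sup>1\<close>, the Urysohn functions sum to \<open>1\<close> exactly at \<open>p\<close>, since every
  other point is a zero of one of them.\<close>
lemma gdelta_point_peak_function:
  assumes cpt: "compact_space X" and hd: "Hausdorff_space X" and p: "p \<in> topspace X"
    and gd: "gdelta_in X {p}" and V: "openin X V" "p \<in> V"
  shows "\<exists>h. peak_function X p h \<and> (\<forall>t. t \<notin> V \<longrightarrow> h t = 0)"
proof -
  obtain g :: "nat \<Rightarrow> 'a \<Rightarrow> real" where g: "\<And>n. continuous_map X (top_of_set {0..1}) (g n)"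
    "\<And>n. g n p = 1" "\<And>t. t \<in> topspace X - {p} \<Longrightarrow> \<exists>n. g n t = 0"
    "\<And>n t. t \<in> topspace X - V \<Longrightarrow> g n t = 0"
    using gdelta_point_Urysohn_sequence[OF assms] by blast
  have g01: "0 \<le> g n x" "g n x \<le> 1" if "x \<in> topspace X" for n x
    using g(1)[of n] that by (auto simp: continuous_map_def)
  define h where "h x = (if x \<in> topspace X then \<Sum>n. (1/2)^Suc n * g n x else 0)" for x
  have "continuous_map X euclideanreal (\<lambda>x. \<Sum>n. (1/2)^Suc n * g n x)"
  proof (rule continuous_map_suminf)
    show "continuous_map X euclideanreal (\<lambda>x. (1/2)^Suc n * g n x)" for n
      using g(1) continuous_map_in_subtopology by (blast intro: continuous_map_real_mult_left)
    show "\<bar>(1/2)^Suc n * g n x\<bar> \<le> (1/2)^Suc n" if "x \<in> topspace X" for n x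
      using g01[OF that, of n] by (simp add: abs_mult mult_left_le)
    show "summable (\<lambda>n. (1/2::real)^Suc n)"
      using power_half_series by (simp add: sums_iff)
  qed
  then have "h \<in> CK X"
    unfolding h_def by (rule CK_restrict)
  moreover have "h p = 1"
    using p power_half_series by (simp add: h_def g(2) sums_iff)
  moreover have "0 \<le> h t \<and> h t \<le> 1" for t
    using half_series_weighted(2,3)[of "\<lambda>n. g n t"] g01 by (auto simp: h_def)
  moreover have "h t < 1" if t: "t \<in> topspace X - {p}" for t
  proof -
    obtain n where "g n t = 0"
      using g(3)[OF t] by blast
    then have "g n t < 1"
      by simp
    then show ?thesis
      using half_series_weighted(4)[of "\<lambda>n. g n t"] g01 t by (auto simp: h_def)
  qed
  moreover have "h t = 0" if "t \<notin> V" for t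
    using g(4) that by (simp add: h_def)
  ultimately show ?thesis
    unfolding peak_function_def by blast
qed

section \<open>Functionals attaining their norm on \<open>C(K)\<close>\<close>

lemma CK_uniform_gap:
  assumes cpt: "compact_space X" and u: "u \<in> CK X" and f: "f \<in> CK X" and "\<epsilon> > 0"
    and less: "\<And>t. t \<in> topspace X \<Longrightarrow> f t \<noteq> 0 \<Longrightarrow> \<bar>u t\<bar> < 1"
  obtains \<eta> where "\<eta> > 0" "\<And>t. t \<in> topspace X \<Longrightarrow> \<epsilon> \<le> \<bar>f t\<bar> \<Longrightarrow> \<bar>u t\<bar> \<le> 1 - \<eta>"
proof -
  define C where "C = {t \<in> topspace X. \<bar>f t\<bar> \<in> {\<epsilon>..}}"
  show thesis
  proof (cases "C = {}")
    case True
    then show thesis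
      using that[of 1] by (auto simp: C_def)
  next
    case False
    have "closedin X C"
      unfolding C_def
      by (intro closedin_continuous_map_preimage[of _ euclideanreal]
          continuous_map_real_abs CK_continuous_map[OF f]) auto
    then have "compactin X C"
      using cpt closedin_compact_space by blast
    then obtain t0 where t0: "t0 \<in> C" "\<And>t. t \<in> C \<Longrightarrow> \<bar>u t\<bar> \<le> \<bar>u t0\<bar>"
      using continuous_map_attains_sup False continuous_map_real_abs[OF CK_continuous_map[OF u]]
      by blast
    have "\<bar>u t0\<bar> < 1"
      using t0(1) less \<open>\<epsilon> > 0\<close> by (auto simp: C_def)
    then show thesis
      using t0(2) by (intro that[of "1 - \<bar>u t0\<bar>"]) (auto simp: C_def)
  qed
qed

lemma CK_dual_flat_direction:
  assumes cpt: "compact_space X" and dual: "CK_dual X \<psi>" and u: "u \<in> CK X"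
    and norming: "\<psi> u = CK_dual_norm X \<psi>" and g: "g \<in> CK X" and "\<kappa> > 0"
    and inside: "\<And>c. \<bar>c\<bar> \<le> \<kappa> \<Longrightarrow> supn X (\<lambda>t. u t + c * g t) \<le> 1"
  shows "\<psi> g = 0"
proof -
  have "c * \<psi> g \<le> 0" if "\<bar>c\<bar> \<le> \<kappa>" for c
  proof -
    have w: "(\<lambda>t. u t + c * g t) \<in> CK X"
      using u g by (intro CK_add CK_cmul)
    have "CK_dual_norm X \<psi> + c * \<psi> g = \<psi> (\<lambda>t. u t + c * g t)"
      using CK_dual_add[OF dual u CK_cmul[OF g]] CK_dual_cmul[OF dual g] norming by simp
    also have "\<dots> \<le> CK_dual_norm X \<psi> * supn X (\<lambda>t. u t + c * g t)"
      using abs_CK_dual_le[OF cpt dual w] by linarith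
    also have "\<dots> \<le> CK_dual_norm X \<psi>"
      using inside[OF that] CK_dual_norm_nonneg[OF cpt dual] by (simp add: mult_left_le)
    finally show ?thesis
      by simp
  qed
  from this[of \<kappa>] this[of "- \<kappa>"] \<open>\<kappa> > 0\<close> show ?thesis
    by (simp add: mult_le_0_iff zero_le_mult_iff)
qed

lemma CK_dual_norming_vanishes_off_level:
  assumes cpt: "compact_space X" and dual: "CK_dual X \<psi>" and u: "u \<in> CK X" "supn X u \<le> 1"
    and norming: "\<psi> u = CK_dual_norm X \<psi>" and g: "g \<in> CK X" and "\<eta> > 0"
    and low: "\<And>t. t \<in> topspace X \<Longrightarrow> g t \<noteq> 0 \<Longrightarrow> \<bar>u t\<bar> \<le> 1 - \<eta>"
  shows "\<psi> g = 0"
proof -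
  define \<kappa> where "\<kappa> = \<eta> / (supn X g + 1)"
  have "\<kappa> > 0"
    using \<open>\<eta> > 0\<close> supn_nonneg[OF cpt g] by (simp add: \<kappa>_def)
  have \<kappa>_le: "\<kappa> * supn X g \<le> \<eta>"
    using \<open>\<eta> > 0\<close> supn_nonneg[OF cpt g] by (simp add: \<kappa>_def field_simps)
  show ?thesis
  proof (rule CK_dual_flat_direction[OF cpt dual u(1) norming g \<open>\<kappa> > 0\<close>])
    fix c :: real
    assume c: "\<bar>c\<bar> \<le> \<kappa>"
    show "supn X (\<lambda>t. u t + c * g t) \<le> 1"
    proof (rule supn_le)
      fix t assume t: "t \<in> topspace X"
      show "\<bar>u t + c * g t\<bar> \<le> 1"
      proof (cases "g t = 0")
        case True
        then show ?thesis
          using abs_le_supn[OF cpt u(1) t] u(2) by simp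
      next
        case False
        have "\<bar>c * g t\<bar> \<le> \<kappa> * supn X g"
          unfolding abs_mult using c abs_le_supn[OF cpt g t] by (intro mult_mono) auto
        then show ?thesis
          using low[OF t False] \<kappa>_le abs_triangle_ineq[of "u t" "c * g t"] by linarith
      qed
    qed simp
  qed
qed

text \<open>Truncating \<open>f\<close> at height \<open>\<epsilon>\<close> splits it into a part of norm \<open>\<le> \<epsilon>\<close> and a part supported where
  \<open>\<bar>u\<bar> \<le> 1 - \<eta>\<close>, which the norming functional kills.\<close>
lemma CK_dual_norming_abs_le:
  assumes cpt: "compact_space X" and dual: "CK_dual X \<psi>" and u: "u \<in> CK X" "supn X u \<le> 1"
    and norming: "\<psi> u = CK_dual_norm X \<psi>" and f: "f \<in> CK X" and "\<epsilon> > 0"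
    and less: "\<And>t. t \<in> topspace X \<Longrightarrow> f t \<noteq> 0 \<Longrightarrow> \<bar>u t\<bar> < 1"
  shows "\<bar>\<psi> f\<bar> \<le> CK_dual_norm X \<psi> * \<epsilon>"
proof -
  obtain \<eta> where \<eta>: "\<eta> > 0" "\<And>t. t \<in> topspace X \<Longrightarrow> \<epsilon> \<le> \<bar>f t\<bar> \<Longrightarrow> \<bar>u t\<bar> \<le> 1 - \<eta>"
    using CK_uniform_gap[OF cpt u(1) f \<open>\<epsilon> > 0\<close> less] by blast
  define low where "low t = max (- \<epsilon>) (min \<epsilon> (f t))" for t
  define high where "high t = f t - low t" for t
  have low: "low \<in> CK X"
  proof -
    have "continuous_map X euclideanreal low"
      unfolding low_def[abs_def] using CK_continuous_map[OF f]
      by (intro continuous_map_real_max continuous_map_real_min) auto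
    moreover have "low t = 0" if "t \<notin> topspace X" for t
      using f that \<open>\<epsilon> > 0\<close> by (simp add: CK_def low_def)
    ultimately show ?thesis
      by (simp add: CK_def)
  qed
  have high: "high \<in> CK X"
    unfolding high_def[abs_def] using f low by (rule CK_diff)
  have "\<epsilon> \<le> \<bar>f t\<bar>" if "high t \<noteq> 0" for t
    using that by (auto simp: high_def low_def)
  then have "\<psi> high = 0"
    using \<eta> by (intro CK_dual_norming_vanishes_off_level[OF cpt dual u norming high \<eta>(1)]) blast
  then have "\<psi> f = \<psi> low"
    using CK_dual_add[OF dual high low] by (simp add: high_def)
  also have "\<bar>\<psi> low\<bar> \<le> CK_dual_norm X \<psi> * \<epsilon>"
  proof -
    have "supn X low \<le> \<epsilon>"
      using \<open>\<epsilon> > 0\<close> by (intro supn_le) (auto simp: low_def)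
    then show ?thesis
      using abs_CK_dual_le[OF cpt dual low] CK_dual_norm_nonneg[OF cpt dual]
      by (meson mult_left_mono order_trans)
  qed
  finally show ?thesis .
qed

lemma CK_dual_norming_vanishes:
  assumes cpt: "compact_space X" and dual: "CK_dual X \<psi>" and u: "u \<in> CK X" "supn X u \<le> 1"
    and norming: "\<psi> u = CK_dual_norm X \<psi>" and f: "f \<in> CK X"
    and less: "\<And>t. t \<in> topspace X \<Longrightarrow> f t \<noteq> 0 \<Longrightarrow> \<bar>u t\<bar> < 1"
  shows "\<psi> f = 0"
proof -
  let ?A = "CK_dual_norm X \<psi>"
  have "\<bar>\<psi> f\<bar> \<le> 0 + e" if "e > 0" for e
  proof -
    have A: "0 \<le> ?A"
      by (rule CK_dual_norm_nonneg[OF cpt dual])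
    then have "\<bar>\<psi> f\<bar> \<le> ?A * (e / (?A + 1))"
      using that by (intro CK_dual_norming_abs_le[OF cpt dual u norming f _ less]) simp
    also have "\<dots> \<le> e"
      using A that by (simp add: field_simps)
    finally show ?thesis
      by simp
  qed
  then show ?thesis
    using field_le_epsilon[of "\<bar>\<psi> f\<bar>" 0] by simp
qed

section \<open>U-embeddings built from peak functions\<close>

definition peak_family :: "'a topology \<Rightarrow> ('n \<Rightarrow> 'a) \<Rightarrow> ('n \<Rightarrow> 'a \<Rightarrow> real) \<Rightarrow> bool" where
  "peak_family X p h \<longleftrightarrow>
     (\<forall>i. p i \<in> topspace X \<and> peak_function X (p i) (h i)) \<and> (\<forall>i j t. i \<noteq> j \<longrightarrow> h i t = 0 \<or> h j t = 0)"

definition peak_embedding :: "('n::finite \<Rightarrow> 'a \<Rightarrow> real) \<Rightarrow> real^'n \<Rightarrow> 'a \<Rightarrow> real" where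
  "peak_embedding h x t = (\<Sum>i\<in>UNIV. x$i * h i t)"

lemma peak_embedding_single_term:
  fixes h :: "'n::finite \<Rightarrow> 'a \<Rightarrow> real"
  assumes "peak_family X p h"
  obtains k where "\<And>x. peak_embedding h x t = x$k * h k t"
proof (cases "\<exists>k. h k t \<noteq> 0")
  case True
  then obtain k where k: "h k t \<noteq> 0"
    by blast
  then have "h j t = 0" if "j \<noteq> k" for j
    using assms that unfolding peak_family_def peak_function_def by metis
  then have "peak_embedding h x t = x$k * h k t" for x
    unfolding peak_embedding_def by (subst sum.remove[of _ k]) auto
  then show thesis
    by (rule that)
next
  case False
  then show thesis
    by (intro that[of undefined]) (simp add: peak_embedding_def)
qed

lemma peak_embedding_at_peak:
  fixes h :: "'n::finite \<Rightarrow> 'a \<Rightarrow> real"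
  assumes "peak_family X p h"
  shows "peak_embedding h x (p i) = x$i"
proof -
  have one: "h i (p i) = 1"
    using assms by (simp add: peak_family_def peak_function_def)
  then have "h j (p i) = 0" if "j \<noteq> i" for j
    using assms that unfolding peak_family_def peak_function_def by (metis zero_neq_one)
  then have "peak_embedding h x (p i) = x$i * h i (p i)"
    unfolding peak_embedding_def by (subst sum.remove[of _ i]) auto
  then show ?thesis
    using one by simp
qed

lemma peak_embedding_CK:
  fixes h :: "'n::finite \<Rightarrow> 'a \<Rightarrow> real"
  assumes "peak_family X p h"
  shows "peak_embedding h x \<in> CK X"
proof -
  have h: "h i \<in> CK X" for i
    using assms by (simp add: peak_family_def peak_function_def)
  then have "continuous_map X euclideanreal (peak_embedding h x)"
    unfolding peak_embedding_def[abs_def]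
    by (intro continuous_map_sum continuous_map_real_mult_left CK_continuous_map) auto
  moreover have "peak_embedding h x t = 0" if "t \<notin> topspace X" for t
    using h that by (simp add: peak_embedding_def CK_def)
  ultimately show ?thesis
    by (simp add: CK_def)
qed

lemma abs_peak_embedding_le:
  fixes h :: "'n::finite \<Rightarrow> 'a \<Rightarrow> real"
  assumes "peak_family X p h"
  shows "\<bar>peak_embedding h x t\<bar> \<le> infnorm x"
proof -
  obtain k where k: "\<And>x. peak_embedding h x t = x$k * h k t"
    using peak_embedding_single_term[OF assms] by blast
  have "\<bar>x$k * h k t\<bar> \<le> \<bar>x$k\<bar>"
    using assms by (simp add: abs_mult peak_family_def peak_function_def mult_left_le)
  then show ?thesis
    using k component_le_infnorm_cart[of x k] by simp
qed

lemma abs_peak_embedding_less_1: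
  fixes h :: "'n::finite \<Rightarrow> 'a \<Rightarrow> real"
  assumes "peak_family X p h" "infnorm x \<le> 1" "t \<in> topspace X - range p"
  shows "\<bar>peak_embedding h x t\<bar> < 1"
proof -
  obtain k where k: "\<And>x. peak_embedding h x t = x$k * h k t"
    using peak_embedding_single_term[OF assms(1)] by blast
  have "t \<noteq> p k"
    using assms(3) by auto
  then have "0 \<le> h k t" "h k t < 1"
    using assms(1,3) by (auto simp: peak_family_def peak_function_def)
  moreover have "\<bar>x$k\<bar> \<le> 1"
    using component_le_infnorm_cart[of x k] assms(2) by linarith
  ultimately have "\<bar>x$k\<bar> * h k t < 1"
    using mult_right_mono[of "\<bar>x$k\<bar>" 1 "h k t"] by linarith
  then show ?thesis
    using k \<open>0 \<le> h k t\<close> by (simp add: abs_mult)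
qed

lemma peak_embedding_isometry:
  fixes h :: "'n::finite \<Rightarrow> 'a \<Rightarrow> real"
  assumes cpt: "compact_space X" and ph: "peak_family X p h"
  shows "linf_CK_isometry X (peak_embedding h)"
  unfolding linf_CK_isometry_def
proof (intro conjI allI)
  fix x y :: "real^'n" and c :: real
  show "peak_embedding h (x + y) = (\<lambda>t. peak_embedding h x t + peak_embedding h y t)"
    by (simp add: peak_embedding_def sum.distrib distrib_right fun_eq_iff)
  show "peak_embedding h (c *\<^sub>R x) = (\<lambda>t. c * peak_embedding h x t)"
    by (simp add: peak_embedding_def sum_distrib_left mult.assoc fun_eq_iff)
  show "peak_embedding h x \<in> CK X"
    by (rule peak_embedding_CK[OF ph])
  show "supn X (peak_embedding h x) = infnorm x"
  proof (rule antisym)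
    show "supn X (peak_embedding h x) \<le> infnorm x"
      using abs_peak_embedding_le[OF ph] by (intro supn_le infnorm_pos_le)
    obtain k where "infnorm x = \<bar>x$k\<bar>"
      using infnorm_attained_cart by blast
    then show "infnorm x \<le> supn X (peak_embedding h x)"
      using abs_le_supn[OF cpt peak_embedding_CK[OF ph]] ph peak_embedding_at_peak[OF ph, of x k]
      by (metis peak_family_def peak_function_def)
  qed
qed

lemma peak_embedding_unique_extension:
  fixes h :: "'n::finite \<Rightarrow> 'a \<Rightarrow> real" and g :: "real^'n \<Rightarrow> real"
  assumes cpt: "compact_space X" and ph: "peak_family X p h" and "linear g"
    and dual: "CK_dual X \<psi>" and extends: "\<And>x. \<psi> (peak_embedding h x) = g x"
    and norm: "CK_dual_norm X \<psi> = (\<Sum>i\<in>UNIV. \<bar>g (axis i 1)\<bar>)"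
    and f: "f \<in> CK X"
  shows "\<psi> f = (\<Sum>i\<in>UNIV. g (axis i 1) * f (p i))"
proof -
  let ?T = "peak_embedding h"
  have expand: "g x = (\<Sum>i\<in>UNIV. x$i * g (axis i 1))" for x
    using linear_cart_basis_expansion[OF \<open>linear g\<close>, of x] by simp
  define s :: "real^'n" where "s = (\<chi> i. sgn (g (axis i 1)))"
  have s: "infnorm s \<le> 1"
    by (rule infnorm_le_cart) (simp add: s_def abs_sgn_eq)
  have "\<psi> (?T s) = CK_dual_norm X \<psi>"
    unfolding extends expand[of s] norm by (simp add: s_def abs_sgn mult.commute)
  moreover have "supn X (?T s) \<le> 1"
    using peak_embedding_isometry[OF cpt ph] s by (simp add: linf_CK_isometry_def)
  moreover define c :: "real^'n" where "c = (\<chi> i. f (p i))"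
  have rest: "(\<lambda>t. f t - ?T c t) \<in> CK X"
    using f peak_embedding_CK[OF ph] by (rule CK_diff)
  moreover have "\<bar>?T s t\<bar> < 1" if "t \<in> topspace X" "f t - ?T c t \<noteq> 0" for t
  proof -
    have "t \<notin> range p"
      using that(2) peak_embedding_at_peak[OF ph] by (auto simp: c_def)
    then show ?thesis
      using abs_peak_embedding_less_1[OF ph s] that(1) by blast
  qed
  ultimately have "\<psi> (\<lambda>t. f t - ?T c t) = 0"
    using CK_dual_norming_vanishes[OF cpt dual peak_embedding_CK[OF ph]] by blast
  moreover have "\<psi> f = \<psi> (\<lambda>t. f t - ?T c t) + \<psi> (?T c)"
    using CK_dual_add[OF dual rest peak_embedding_CK[OF ph, of c]] by simp
  ultimately have "\<psi> f = \<psi> (?T c)"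
    by simp
  also have "\<dots> = (\<Sum>i\<in>UNIV. g (axis i 1) * f (p i))"
    unfolding extends expand[of c] by (simp add: c_def mult.commute)
  finally show ?thesis .
qed

lemma linf_dual_norm_le_CK_dual_norm:
  fixes T :: "real^'n \<Rightarrow> 'a \<Rightarrow> real"
  assumes cpt: "compact_space X" and iso: "linf_CK_isometry X T" and dual: "CK_dual X \<phi>"
    and extends: "\<And>x. \<phi> (T x) = g x"
  shows "linf_dual_norm g \<le> CK_dual_norm X \<phi>"
  unfolding linf_dual_norm_def
proof (rule cSup_least)
  have "\<bar>g 0\<bar> \<in> {\<bar>g x\<bar> |x. infnorm x \<le> 1}"
    by (rule CollectI, rule exI[of _ 0]) (simp add: infnorm_0)
  then show "{\<bar>g x\<bar> |x. infnorm x \<le> 1} \<noteq> {}"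
    by blast
  fix r assume "r \<in> {\<bar>g x\<bar> |x. infnorm x \<le> 1}"
  then obtain x where "r = \<bar>g x\<bar>" "infnorm x \<le> 1"
    by blast
  then show "r \<le> CK_dual_norm X \<phi>"
    using abs_le_CK_dual_norm[OF cpt dual, of "T x"] iso extends
    by (simp add: linf_CK_isometry_def)
qed

lemma peak_embedding_U_embedding:
  fixes h :: "'n::finite \<Rightarrow> 'a \<Rightarrow> real"
  assumes cpt: "compact_space X" and ph: "peak_family X p h"
  shows "U_embedding X (peak_embedding h)"
  unfolding U_embedding_def
proof (intro conjI allI impI)
  show iso: "linf_CK_isometry X (peak_embedding h)"
    by (rule peak_embedding_isometry[OF cpt ph])
  fix g :: "real^'n \<Rightarrow> real"
  assume "linear g"
  define \<phi> where "\<phi> f = (\<Sum>i\<in>UNIV. g (axis i 1) * f (p i))" for f :: "'a \<Rightarrow> real"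
  have p: "p i \<in> topspace X" for i
    using ph by (simp add: peak_family_def peak_function_def)
  have dual: "CK_dual X \<phi>"
    unfolding \<phi>_def[abs_def] by (rule CK_dual_point_combination(1)[OF cpt]) (simp_all add: p)
  have extends: "\<phi> (peak_embedding h x) = g x" for x
    using linear_cart_basis_expansion[OF \<open>linear g\<close>, of x]
    by (simp add: \<phi>_def peak_embedding_at_peak[OF ph] mult.commute)
  have "CK_dual_norm X \<phi> \<le> (\<Sum>i\<in>UNIV. \<bar>g (axis i 1)\<bar>)"
    unfolding \<phi>_def[abs_def] by (rule CK_dual_point_combination(2)[OF cpt]) (simp_all add: p)
  moreover have "linf_dual_norm g \<le> CK_dual_norm X \<phi>"
    using linf_dual_norm_le_CK_dual_norm[OF cpt iso dual extends] .
  ultimately have norm: "CK_dual_norm X \<phi> = linf_dual_norm g"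
    using linf_dual_norm_linear[OF \<open>linear g\<close>] by linarith
  show "\<exists>\<phi>. CK_dual X \<phi> \<and> (\<forall>x. \<phi> (peak_embedding h x) = g x) \<and> CK_dual_norm X \<phi> = linf_dual_norm g \<and>
      (\<forall>\<psi>. CK_dual X \<psi> \<and> (\<forall>x. \<psi> (peak_embedding h x) = g x) \<and> CK_dual_norm X \<psi> = linf_dual_norm g
        \<longrightarrow> (\<forall>f\<in>CK X. \<psi> f = \<phi> f))"
  proof (intro exI[of _ \<phi>] conjI allI impI ballI)
    fix \<psi> f
    assume "CK_dual X \<psi> \<and> (\<forall>x. \<psi> (peak_embedding h x) = g x) \<and> CK_dual_norm X \<psi> = linf_dual_norm g"
      and "f \<in> CK X"
    then show "\<psi> f = \<phi> f"
      unfolding \<phi>_def linf_dual_norm_linear[OF \<open>linear g\<close>]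
      using peak_embedding_unique_extension[OF cpt ph \<open>linear g\<close>] by blast
  qed (use dual extends norm in auto)
qed

lemma gdelta_points_peak_family:
  assumes cpt: "compact_space X" and hd: "Hausdorff_space X"
    and S: "S \<subseteq> gdelta_points X" "finite S" "card S = CARD('n::finite)"
  obtains p :: "'n::finite \<Rightarrow> 'a" and h where "peak_family X p h"
proof -
  obtain p :: "'n \<Rightarrow> 'a" where bij: "bij_betw p UNIV S"
    using finite_same_card_bij[OF finite_class.finite_UNIV S(2) S(3)[symmetric]] by blast
  have "p i \<in> S" for i
    using bij_betwE[OF bij] by blast
  then have p: "p i \<in> topspace X" "gdelta_in X {p i}" for i
    using S(1) by (auto simp: gdelta_points_def)
  have "inj p"
    using bij_betw_imp_inj_on[OF bij] .
  obtain V where V: "\<And>i. openin X (V i)" "\<And>i. p i \<in> V i" "\<And>i j. i \<noteq> j \<Longrightarrow> disjnt (V i) (V j)"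
    using Hausdorff_space_disjoint_open_nbhds[OF hd p(1) \<open>inj p\<close>] by blast
  have "\<forall>i. \<exists>h. peak_function X (p i) h \<and> (\<forall>t. t \<notin> V i \<longrightarrow> h t = 0)"
    using gdelta_point_peak_function[OF cpt hd p V(1,2)] by blast
  then obtain h where h: "\<And>i. peak_function X (p i) (h i)" "\<And>i t. t \<notin> V i \<Longrightarrow> h i t = 0"
    by (metis choice)
  have "h i t = 0 \<or> h j t = 0" if "i \<noteq> j" for i j t
    using h(2)[of t i] h(2)[of t j] V(3)[OF that] by (auto simp: disjnt_def)
  then have "peak_family X p h"
    using h(1) p(1) by (simp add: peak_family_def)
  then show thesis
    by (rule that)
qed

theorem proposition6p31:
  fixes X :: "'a topology"
  assumes "compact_space X" and "Hausdorff_space X"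
  shows "(\<exists>T :: real^'n \<Rightarrow> ('a \<Rightarrow> real). U_embedding X T) \<longleftrightarrow>
         (\<exists>S. S \<subseteq> gdelta_points X \<and> finite S \<and> card S = CARD('n))"
proof
  assume "\<exists>T :: real^'n \<Rightarrow> ('a \<Rightarrow> real). U_embedding X T"
  then show "\<exists>S. S \<subseteq> gdelta_points X \<and> finite S \<and> card S = CARD('n)"
    using U_embedding_imp_gdelta_points[OF assms] by blast
next
  assume "\<exists>S. S \<subseteq> gdelta_points X \<and> finite S \<and> card S = CARD('n)"
  then obtain p :: "'n \<Rightarrow> 'a" and h where "peak_family X p h"
    using gdelta_points_peak_family[OF assms] by blast
  then show "\<exists>T :: real^'n \<Rightarrow> ('a \<Rightarrow> real). U_embedding X T"
    using peak_embedding_U_embedding[OF assms(1)] by blast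
qed

end
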